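(* Let $\phi\in\mathcal{O}$, $\theta\in(0,\pi)$, and let $f$ be a positive smooth function on $\mathcal{C}_\theta$. Let $h>0$ be the support function of a symmetric $\widehat{\Sigma}\in\mathcal{K}_\theta^\circ$ solving $$\frac{1}{|\widehat{\Sigma}|}\phi\Big(\frac{\ell}{h}\Big)h\det(h_{ij}+h\delta_{ij})=f\ \text{ in }\mathcal{C}_\theta,\qquad\nabla_\mu h=\cot\theta\,h\ \text{ on }\partial\mathcal{C}_\theta.$$ Then there exists a constant $C_1>0$ depending only on $f,n,\theta,\phi,\|h\|_{C^0}$ such that $|\nabla h|\leqslant C_1$ on $\mathcal{C}_\theta$.
   Context: Setting: $n\geqslant1$, $\mathbb{R}^{n+1}_+=\{x\in\mathbb{R}^{n+1}: x_{n+1}>0\}$, $e=(0,\dots,0,-1)$, $\theta\in(0,\pi)$. A capillary hypersurface is a compact embedded $C^2$ hypersurface $\Sigma\subset\overline{\mathbb{R}^{n+1}_+}$ with boundary $\partial\Sigma\subset\partial\mathbb{R}^{n+1}_+$ whose outward unit normal $\nu$ satisfies $\langle\nu,e\rangle=\cos(\pi-\theta)$ along $\partial\Sigma$. If $\Sigma$ is convex with positive Gauss curvature, the domain $\widehat{\Sigma}$ bounded by $\Sigma$ and $\partial\mathbb{R}^{n+1}_+$ is a capillary convex body; $\mathcal{K}_\theta$ is the family of these, $\mathcal{K}_\theta^\circ$ the subfamily whose flat boundary $\partial\widehat{\Sigma}\setminus\Sigma$ contains the origin in its relative interior. $|\widehat{\Sigma}|$ is the volume. $\mathcal{C}_\theta=\{\xi\in\overline{\mathbb{R}^{n+1}_+}:|\xi-\cos\theta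 e|=1\}$ with induced round metric $\delta$, connection $\nabla$, $\mu$ the outward unit co-normal of $\partial\mathcal{C}_\theta$ in $\mathcal{C}_\theta$; $h_{ij}$ are second covariant derivatives in a local orthonormal frame. The capillary Gauss map $\widetilde{\nu}=\nu+\cos\theta e:\Sigma\to\mathcal{C}_\theta$ is a diffeomorphism and the support function is $h(\xi)=\langle\widetilde{\nu}^{-1}(\xi),\xi-\cos\theta e\rangle$. $\ell(\xi)=\sin^2\theta+\cos\theta\langle\xi,e\rangle$. Class $\mathcal{O}$: the $C^2$, strictly increasing, convex, log-concave functions $\phi:[0,+\infty)\to[0,+\infty)$ with $\phi(0)=0$ satisfying (A1) $\lim_{x\to0^+}\phi'(x)=0$; (A2) $\liminf_{x\to+\infty}\phi(x)/x^{n+1}>0$; (A3) $\frac{d}{dx}\log\frac{\phi(x)}{x}\geqslant0$ for all $x>0$. Even/symmetric: for $\xi\in\mathcal{C}_\theta$ let $\widehat{\xi}=(-\xi_1,\dots,-\xi_n,\xi_{n+1})$; a function $g$ is even if $g(\xi)=g(\widehat{\xi})$; $\widehat{\Sigma}$ is symmetric if its support function is even. *)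

theory Defs
  imports "HOL-Analysis.Analysis"
begin

text \<open>Ambient space R^(n+1) is real^'n with CARD('n) = n+1.  The fixed unit vector e
  plays the role of (0,...,0,-1); the open upper half space is {x. x \<bullet> e < 0}.\<close>

definition uhalf :: "real^'n \<Rightarrow> (real^'n) set" where
  "uhalf e = {x. x \<bullet> e < 0}"

definition cuhalf :: "real^'n \<Rightarrow> (real^'n) set" where
  "cuhalf e = {x. x \<bullet> e \<le> 0}"

definition bplane :: "real^'n \<Rightarrow> (real^'n) set" where
  "bplane e = {x. x \<bullet> e = 0}"

definition capC :: "real \<Rightarrow> real^'n \<Rightarrow> (real^'n) set" where
  "capC \<theta> e = {\<xi>. \<xi> \<bullet> e \<le> 0 \<and> norm (\<xi> - cos \<theta> *\<^sub>R e) = 1}"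

definition capBd :: "real \<Rightarrow> real^'n \<Rightarrow> (real^'n) set" where
  "capBd \<theta> e = {\<xi> \<in> capC \<theta> e. \<xi> \<bullet> e = 0}"

definition hatref :: "real^'n \<Rightarrow> real^'n \<Rightarrow> real^'n" where
  "hatref e \<xi> = (2 * (\<xi> \<bullet> e)) *\<^sub>R e - \<xi>"

definition ell :: "real \<Rightarrow> real^'n \<Rightarrow> real^'n \<Rightarrow> real" where
  "ell \<theta> e \<xi> = (sin \<theta>)\<^sup>2 + cos \<theta> * (\<xi> \<bullet> e)"

definition sigma :: "(real^'n) set \<Rightarrow> real^'n \<Rightarrow> (real^'n) set" where
  "sigma K e = closure (frontier K \<inter> uhalf e)"

text \<open>A local C^2 defining function F (gradient G, Hessian H) of K near Sigma:
  K \<inter> U = {F \<le> 0} \<inter> closed half space, DF nonzero; outward normal is G / |G|.\<close>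
definition C2_chart ::
  "real^'n \<Rightarrow> (real^'n) set \<Rightarrow> (real^'n) set \<Rightarrow> (real^'n \<Rightarrow> real)
     \<Rightarrow> (real^'n \<Rightarrow> real^'n) \<Rightarrow> (real^'n \<Rightarrow> real^'n \<Rightarrow> real^'n) \<Rightarrow> bool" where
  "C2_chart e K U F G H \<longleftrightarrow> open U \<and>
     (\<forall>y\<in>U. (F has_derivative (\<lambda>v. G y \<bullet> v)) (at y) \<and> (G has_derivative H y) (at y) \<and> G y \<noteq> 0) \<and>
     (\<forall>v. continuous_on U (\<lambda>y. H y v)) \<and>
     K \<inter> U = {y \<in> U. F y \<le> 0 \<and> y \<bullet> e \<le> 0}"

definition nu :: "real^'n \<Rightarrow> (real^'n) set \<Rightarrow> real^'n \<Rightarrow> real^'n" where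
  "nu e K X = (SOME N. \<exists>U F G H. C2_chart e K U F G H \<and> X \<in> U \<and> N = G X /\<^sub>R norm (G X))"

text \<open>Capillary convex body (the class K_theta): Sigma is a compact embedded C^2 convex
  hypersurface with boundary on the plane, positive Gauss curvature (definite second
  fundamental form) and capillary contact angle theta.\<close>
definition cap_body :: "real \<Rightarrow> real^'n \<Rightarrow> (real^'n) set \<Rightarrow> bool" where
  "cap_body \<theta> e K \<longleftrightarrow> compact K \<and> convex K \<and> K \<subseteq> cuhalf e \<and> interior K \<noteq> {} \<and>
     (\<forall>x \<in> sigma K e. \<exists>U F G H. C2_chart e K U F G H \<and> x \<in> U \<and>
        (\<forall>v. v \<noteq> 0 \<and> v \<bullet> G x = 0 \<longrightarrow> H x v \<bullet> v > 0)) \<and>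
     (\<forall>x \<in> sigma K e. x \<bullet> e = 0 \<longrightarrow> nu e K x \<bullet> e = cos (pi - \<theta>))"

definition cap_body0 :: "real \<Rightarrow> real^'n \<Rightarrow> (real^'n) set \<Rightarrow> bool" where
  "cap_body0 \<theta> e K \<longleftrightarrow> cap_body \<theta> e K \<and> 0 \<in> rel_interior (K \<inter> bplane e)"

definition supp :: "real \<Rightarrow> real^'n \<Rightarrow> (real^'n) set \<Rightarrow> real^'n \<Rightarrow> real" where
  "supp \<theta> e K \<xi> = (THE X. X \<in> sigma K e \<and> nu e K X + cos \<theta> *\<^sub>R e = \<xi>) \<bullet> (\<xi> - cos \<theta> *\<^sub>R e)"

definition even_cap :: "real \<Rightarrow> real^'n \<Rightarrow> (real^'n \<Rightarrow> real) \<Rightarrow> bool" where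
  "even_cap \<theta> e g \<longleftrightarrow> (\<forall>\<xi> \<in> capC \<theta> e. g (hatref e \<xi>) = g \<xi>)"

text \<open>Covariant derivatives are computed through the 0-homogeneous extension about p,
  whose ambient gradient/Hessian restricted to the tangent space equal the covariant ones.\<close>
definition capcone :: "real \<Rightarrow> real^'n \<Rightarrow> (real^'n) set" where
  "capcone \<theta> e = {x. x \<noteq> cos \<theta> *\<^sub>R e \<and>
      cos \<theta> *\<^sub>R e + (x - cos \<theta> *\<^sub>R e) /\<^sub>R norm (x - cos \<theta> *\<^sub>R e) \<in> capC \<theta> e}"

definition ext0 :: "real \<Rightarrow> real^'n \<Rightarrow> (real^'n \<Rightarrow> real) \<Rightarrow> real^'n \<Rightarrow> real" where
  "ext0 \<theta> e h x = h (cos \<theta> *\<^sub>R e + (x - cos \<theta> *\<^sub>R e) /\<^sub>R norm (x - cos \<theta> *\<^sub>R e))"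

definition sgrad :: "real \<Rightarrow> real^'n \<Rightarrow> (real^'n \<Rightarrow> real) \<Rightarrow> real^'n \<Rightarrow> real^'n" where
  "sgrad \<theta> e h x = (SOME v. (ext0 \<theta> e h has_derivative (\<lambda>u. v \<bullet> u)) (at x within capcone \<theta> e))"

definition shess :: "real \<Rightarrow> real^'n \<Rightarrow> (real^'n \<Rightarrow> real) \<Rightarrow> real^'n \<Rightarrow> real^'n \<Rightarrow> real^'n" where
  "shess \<theta> e h x = frechet_derivative (sgrad \<theta> e h) (at x within capcone \<theta> e)"

definition snormal :: "real \<Rightarrow> real^'n \<Rightarrow> real^'n \<Rightarrow> real^'n" where
  "snormal \<theta> e \<xi> = \<xi> - cos \<theta> *\<^sub>R e"

definition tproj :: "real \<Rightarrow> real^'n \<Rightarrow> real^'n \<Rightarrow> real^'n \<Rightarrow> real^'n" where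
  "tproj \<theta> e \<xi> v = v - (v \<bullet> snormal \<theta> e \<xi>) *\<^sub>R snormal \<theta> e \<xi>"

text \<open>det(h_ij + h delta_ij): determinant of the tangential block, extended by the identity
  on the normal direction.\<close>
definition sdet :: "real \<Rightarrow> real^'n \<Rightarrow> (real^'n \<Rightarrow> real) \<Rightarrow> real^'n \<Rightarrow> real" where
  "sdet \<theta> e h \<xi> = det (matrix (\<lambda>v.
      tproj \<theta> e \<xi> (shess \<theta> e h \<xi> (tproj \<theta> e \<xi> v) + h \<xi> *\<^sub>R tproj \<theta> e \<xi> v)
      + (v \<bullet> snormal \<theta> e \<xi>) *\<^sub>R snormal \<theta> e \<xi>))"

definition conormal :: "real \<Rightarrow> real^'n \<Rightarrow> real^'n \<Rightarrow> real^'n" where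
  "conormal \<theta> e \<xi> = (THE \<mu>. norm \<mu> = 1 \<and> \<mu> \<bullet> snormal \<theta> e \<xi> = 0 \<and>
      (\<forall>v. v \<bullet> snormal \<theta> e \<xi> = 0 \<and> v \<bullet> e = 0 \<longrightarrow> \<mu> \<bullet> v = 0) \<and> \<mu> \<bullet> e > 0)"

definition solves_eq :: "real \<Rightarrow> real^'n \<Rightarrow> (real \<Rightarrow> real) \<Rightarrow> (real^'n \<Rightarrow> real)
     \<Rightarrow> (real^'n) set \<Rightarrow> (real^'n \<Rightarrow> real) \<Rightarrow> bool" where
  "solves_eq \<theta> e \<phi> f K h \<longleftrightarrow>
     (\<forall>x \<in> capcone \<theta> e. ext0 \<theta> e h differentiable (at x within capcone \<theta> e)) \<and>
     (\<forall>\<xi> \<in> capC \<theta> e. sgrad \<theta> e h differentiable (at \<xi> within capcone \<theta> e)) \<and>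
     (\<forall>\<xi> \<in> capC \<theta> e.
        (1 / measure lebesgue K) * \<phi> (ell \<theta> e \<xi> / h \<xi>) * h \<xi> * sdet \<theta> e h \<xi> = f \<xi>) \<and>
     (\<forall>\<xi> \<in> capBd \<theta> e. sgrad \<theta> e h \<xi> \<bullet> conormal \<theta> e \<xi> = cot \<theta> * h \<xi>)"

definition class_O :: "nat \<Rightarrow> (real \<Rightarrow> real) \<Rightarrow> bool" where
  "class_O n \<phi> \<longleftrightarrow>
     (\<exists>\<phi>' \<phi>''. (\<forall>x\<ge>0. (\<phi> has_real_derivative \<phi>' x) (at x within {0..}) \<and>
                        (\<phi>' has_real_derivative \<phi>'' x) (at x within {0..})) \<and>
               continuous_on {0..} \<phi>'') \<and>
     strict_mono_on {0..} \<phi> \<and> convex_on {0..} \<phi> \<and> concave_on {0<..} (\<lambda>x. ln (\<phi> x)) \<and>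
     (\<forall>x\<ge>0. \<phi> x \<ge> 0) \<and> \<phi> 0 = 0 \<and>
     ((\<lambda>x. deriv \<phi> x) \<longlongrightarrow> 0) (at_right 0) \<and>
     Liminf at_top (\<lambda>x. ereal (\<phi> x / x ^ (n + 1))) > 0 \<and>
     (\<forall>x>0. deriv (\<lambda>t. ln (\<phi> t / t)) x \<ge> 0)"

fun iterD :: "(real^'n) list \<Rightarrow> (real^'n \<Rightarrow> real) \<Rightarrow> real^'n \<Rightarrow> real" where
  "iterD [] g = g"
| "iterD (v # vs) g = (\<lambda>x. frechet_derivative (iterD vs g) (at x) v)"

definition smooth_on :: "(real^'n) set \<Rightarrow> (real^'n \<Rightarrow> real) \<Rightarrow> bool" where
  "smooth_on U g \<longleftrightarrow> open U \<and> (\<forall>vs. \<forall>x\<in>U. iterD vs g differentiable (at x))"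

end

theory Submission
  imports Defs
begin

(* Positive Gauss curvature makes each xi in C_theta the capillary
   normal of exactly one point of Sigma, namely the maximiser over K of the linear function
   <., xi - cos theta e> (a maximiser lies on Sigma, the contact angle condition identifies its
   normal, strict convexity makes it unique).  Hence h(xi) = max {<Y, xi - cos theta e> | Y in K}.
   Testing |h| <= M at the pole (cos theta - 1) e and on the equator orthogonal to e confines K to
   the ball of radius R = M + 2M / sin theta, so h is R-Lipschitz.  Its 0-homogeneous extension is
   then 2R-Lipschitz near C_theta: the radial derivative vanishes and |<grad h, u>| <= 2R |u| for
   every tangent u pointing into C_theta.  Such a u with <grad h, u> >= |grad h|^2 and
   |u| <= |grad h| + 1 always exists, whence |grad h| <= 2R + 1. *)

section \<open>One-sided directional estimates\<close>

lemma has_real_derivative_along_line: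
  assumes "(F has_derivative D) (at (X + t *\<^sub>R w))"
  shows "((\<lambda>s. F (X + s *\<^sub>R w)) has_real_derivative D w) (at t)"
proof -
  have "((\<lambda>s. X + s *\<^sub>R w) has_derivative (\<lambda>s. s *\<^sub>R w)) (at t)"
    by (auto intro!: derivative_eq_intros)
  from has_derivative_compose[OF this assms]
  have "((\<lambda>s. F (X + s *\<^sub>R w)) has_derivative (\<lambda>s. D (s *\<^sub>R w))) (at t)" .
  moreover have "(\<lambda>s. D (s *\<^sub>R w)) = (*) (D w)"
    using linear_scale[OF has_derivative_linear[OF assms]] by (auto simp: mult.commute)
  ultimately show ?thesis
    by (simp add: has_field_derivative_def)
qed

lemma has_real_derivative_pos_eventually_gt:
  fixes g :: "real \<Rightarrow> real"
  assumes "(g has_real_derivative l) (at x)" and "0 < l"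
  shows "\<forall>\<^sub>F t in at_right x. g x < g t"
proof -
  obtain d where "d > 0" and d: "\<And>h. 0 < h \<Longrightarrow> h < d \<Longrightarrow> g x < g (x + h)"
    using has_real_derivative_pos_inc_right[OF assms] by auto
  show ?thesis
    unfolding eventually_at_right_field
  proof (intro exI conjI allI impI)
    show "x < x + d" using \<open>d > 0\<close> by simp
    show "g x < g y" if "x < y" "y < x + d" for y
      using d[of "y - x"] that by simp
  qed
qed

lemma has_derivative_abs_le_at_right:
  fixes f :: "'a::real_normed_vector \<Rightarrow> real"
  assumes der: "(f has_derivative D) (at x within S)"
    and ev: "\<forall>\<^sub>F t in at_right 0. x + t *\<^sub>R u \<in> S \<and> \<bar>f (x + t *\<^sub>R u) - f x\<bar> \<le> L * t"
  shows "\<bar>D u\<bar> \<le> L"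
proof -
  obtain d where d: "d > 0" and P: "\<And>t. 0 < t \<Longrightarrow> t < d \<Longrightarrow>
      x + t *\<^sub>R u \<in> S \<and> \<bar>f (x + t *\<^sub>R u) - f x\<bar> \<le> L * t"
    using ev by (auto simp: eventually_at_right_field)
  have "((\<lambda>t. x + t *\<^sub>R u) has_derivative (\<lambda>t. t *\<^sub>R u)) (at 0 within {0<..<d})"
    by (auto intro!: derivative_eq_intros)
  moreover have "(f has_derivative D) (at (x + 0 *\<^sub>R u) within (\<lambda>t. x + t *\<^sub>R u) ` {0<..<d})"
    using P by (auto intro: has_derivative_subset[OF der])
  ultimately have "((\<lambda>t. f (x + t *\<^sub>R u)) has_derivative (\<lambda>t. D (t *\<^sub>R u))) (at 0 within {0<..<d})"
    by (rule has_derivative_in_compose)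
  moreover have "(\<lambda>t. D (t *\<^sub>R u)) = (*) (D u)"
    using linear_scale[OF has_derivative_linear[OF der]] by (auto simp: mult.commute)
  moreover have "at 0 within {0<..<d} = at_right (0::real)"
    by (rule at_within_nhd[where S = "{..<d}"]) (use d in auto)
  ultimately have "((\<lambda>t. f (x + t *\<^sub>R u)) has_real_derivative D u) (at_right 0)"
    by (simp add: has_field_derivative_def)
  then have "((\<lambda>t. (f (x + t *\<^sub>R u) - f x) / t) \<longlongrightarrow> D u) (at_right 0)"
    by (simp add: has_field_derivative_iff)
  then have "((\<lambda>t. \<bar>(f (x + t *\<^sub>R u) - f x) / t\<bar>) \<longlongrightarrow> \<bar>D u\<bar>) (at_right 0)"
    by (rule tendsto_rabs)
  moreover have "\<forall>\<^sub>F t in at_right 0. \<bar>(f (x + t *\<^sub>R u) - f x) / t\<bar> \<le> L"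
    unfolding eventually_at_right_field
    using d P by (auto intro!: exI[of _ d] simp: abs_divide pos_divide_le_eq)
  ultimately show ?thesis
    by (rule tendsto_upperbound) simp
qed

lemma eventually_at_right_quadratic_nonpos:
  fixes a b k :: real
  assumes "a \<le> 0" and "a < 0 \<or> b < 0"
  shows "\<forall>\<^sub>F t in at_right 0. a + t * b + t\<^sup>2 * k \<le> 0"
proof (cases "a < 0")
  case True
  have "((\<lambda>t. a + t * b + t\<^sup>2 * k) \<longlongrightarrow> a + 0 * b + 0\<^sup>2 * k) (at_right 0)"
    by (intro tendsto_intros)
  then have "\<forall>\<^sub>F t in at_right 0. a + t * b + t\<^sup>2 * k < 0"
    using True by (auto dest: order_tendstoD(2)[where a = 0])
  then show ?thesis
    by eventually_elim simp
next
  case False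
  with assms have "a = 0" "b < 0" by auto
  have "((\<lambda>t. b + t * k) \<longlongrightarrow> b + 0 * k) (at_right 0)"
    by (intro tendsto_intros)
  then have "\<forall>\<^sub>F t in at_right 0. b + t * k < 0"
    using \<open>b < 0\<close> by (auto dest: order_tendstoD(2)[where a = 0])
  moreover have "\<forall>\<^sub>F t in at_right 0. (0::real) < t"
    by (simp add: eventually_at_right_less)
  ultimately show ?thesis
  proof eventually_elim
    case (elim t)
    then have "t * (b + t * k) \<le> 0" by (simp add: mult_pos_neg less_imp_le)
    then show ?case using \<open>a = 0\<close> by (simp add: algebra_simps power2_eq_square)
  qed
qed

lemma eventually_at_right_line_mem_open:
  fixes X w :: "'a::real_normed_vector"
  assumes "open U" and "X \<in> U"
  shows "\<forall>\<^sub>F t in at_right 0. X + t *\<^sub>R w \<in> U"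
proof -
  have "((\<lambda>t. X + t *\<^sub>R w) \<longlongrightarrow> X + 0 *\<^sub>R w) (at_right 0)"
    by (intro tendsto_intros)
  then show ?thesis
    using assms by (auto intro: topological_tendstoD)
qed

lemma eventually_at_right_segment_mem_convex:
  assumes "convex K" and "X \<in> K" and "Y \<in> K"
  shows "\<forall>\<^sub>F t in at_right 0. X + t *\<^sub>R (Y - X) \<in> K"
proof -
  have "\<forall>\<^sub>F t in at_right 0. 0 < t \<and> t < (1::real)"
    unfolding eventually_at_right_field by (intro exI[of _ 1]) auto
  then show ?thesis
  proof eventually_elim
    case (elim t)
    then have "(1 - t) *\<^sub>R X + t *\<^sub>R Y \<in> K"
      using assms by (intro convexD) auto
    then show ?case by (simp add: algebra_simps)
  qed
qed

lemma eventually_at_right_obtain_pos: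
  assumes "\<forall>\<^sub>F t in at_right (0::real). P t"
  obtains t where "0 < t" "P t"
proof -
  have "\<forall>\<^sub>F t in at_right (0::real). 0 < t \<and> P t"
    using assms eventually_at_right_less[of 0] by eventually_elim simp
  then show thesis
    using eventually_happens'[of "at_right (0::real)"] that by auto
qed

lemma inner_nonpos_of_eventually_mem_maximizer:
  assumes ev: "\<forall>\<^sub>F t in at_right 0. X + t *\<^sub>R w \<in> K" and max: "\<forall>Y\<in>K. Y \<bullet> \<nu> \<le> X \<bullet> \<nu>"
  shows "w \<bullet> \<nu> \<le> 0"
proof -
  obtain t :: real where "0 < t" "X + t *\<^sub>R w \<in> K"
    using eventually_at_right_obtain_pos[OF ev] .
  with max have "(X + t *\<^sub>R w) \<bullet> \<nu> \<le> X \<bullet> \<nu>"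
    by blast
  then have "t * (w \<bullet> \<nu>) \<le> 0"
    by (simp add: inner_add_left)
  then show ?thesis
    using \<open>0 < t\<close> by (simp add: mult_le_0_iff)
qed

lemma norm_scaleR_inverse_norm_diff_le:
  fixes a b :: "'a::real_normed_vector"
  assumes "norm b = 1" and "a \<noteq> 0"
  shows "norm (a /\<^sub>R norm a - b) \<le> 2 * norm (a - b)"
proof -
  have "norm (a /\<^sub>R norm a - a) = \<bar>1 - norm a\<bar>"
  proof -
    have "a /\<^sub>R norm a - a = (1 / norm a - 1) *\<^sub>R a" by (simp add: algebra_simps divide_inverse)
    then show ?thesis using assms(2) by (simp add: abs_mult_pos[symmetric] algebra_simps divide_simps)
  qed
  also have "\<dots> \<le> norm (a - b)"
    using norm_triangle_ineq3[of b a] assms(1) by (simp add: norm_minus_commute)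
  finally show ?thesis
    using norm_triangle_ineq[of "a /\<^sub>R norm a - a" "a - b"] by simp
qed

lemma lipschitz_on_support_function:
  fixes h :: "'a::real_inner \<Rightarrow> real"
  assumes le: "\<And>\<xi> Y. \<xi> \<in> S \<Longrightarrow> Y \<in> K \<Longrightarrow> Y \<bullet> (\<xi> - p) \<le> h \<xi>"
    and attained: "\<And>\<xi>. \<xi> \<in> S \<Longrightarrow> \<exists>X\<in>K. h \<xi> = X \<bullet> (\<xi> - p)"
    and K: "K \<subseteq> cball 0 R" and "0 \<le> R"
  shows "R-lipschitz_on S h"
proof (rule lipschitz_onI)
  have one_sided: "h \<xi> - h \<eta> \<le> R * dist \<xi> \<eta>" if "\<xi> \<in> S" "\<eta> \<in> S" for \<xi> \<eta>
  proof -
    obtain X where X: "X \<in> K" "h \<xi> = X \<bullet> (\<xi> - p)"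
      using attained[OF \<open>\<xi> \<in> S\<close>] by blast
    then have "h \<xi> - h \<eta> \<le> X \<bullet> (\<xi> - p) - X \<bullet> (\<eta> - p)"
      using le[OF \<open>\<eta> \<in> S\<close>] by simp
    also have "\<dots> = X \<bullet> (\<xi> - \<eta>)"
      by (simp add: inner_diff_right)
    also have "\<dots> \<le> norm X * norm (\<xi> - \<eta>)"
      by (rule norm_cauchy_schwarz)
    also have "\<dots> \<le> R * dist \<xi> \<eta>"
      using K X(1) by (auto simp: dist_norm subset_iff intro!: mult_right_mono)
    finally show ?thesis .
  qed
  show "dist (h \<xi>) (h \<eta>) \<le> R * dist \<xi> \<eta>" if "\<xi> \<in> S" "\<eta> \<in> S" for \<xi> \<eta>
    using one_sided[OF that] one_sided[OF that(2,1)] by (simp add: dist_real_def dist_commute)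
qed fact

section \<open>The capillary support function\<close>

lemma C2_chartD:
  assumes "C2_chart e K U F G H" and "X \<in> U"
  shows "open U" "(F has_derivative (\<lambda>v. G X \<bullet> v)) (at X)" "(G has_derivative H X) (at X)"
    "G X \<noteq> 0" "K \<inter> U = {y \<in> U. F y \<le> 0 \<and> y \<bullet> e \<le> 0}"
  using assms unfolding C2_chart_def by auto

lemma sigma_subset: "closed K \<Longrightarrow> sigma K e \<subseteq> K"
  unfolding sigma_def
  by (metis closure_closed closure_mono frontier_closed frontier_subset_closed inf.cobounded1 order_trans)

lemma C2_chart_eventually_mem:
  assumes ch: "C2_chart e K U F G H" and X: "X \<in> K" "X \<in> U"
    and Gw: "G X \<bullet> w < 0" and dir: "X \<bullet> e < 0 \<or> w \<bullet> e < 0"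
  shows "\<forall>\<^sub>F t in at_right 0. X + t *\<^sub>R w \<in> K"
proof -
  note chart = C2_chartD[OF ch X(2)]
  have FX: "F X \<le> 0" and Xe: "X \<bullet> e \<le> 0"
    using chart(5) X by auto
  have "((\<lambda>t. - F (X + t *\<^sub>R w)) has_real_derivative - (G X \<bullet> w)) (at 0)"
    using has_real_derivative_along_line[of F _ X 0 w] chart(2) by (auto intro: DERIV_minus)
  from has_real_derivative_pos_eventually_gt[OF this] Gw
  have "\<forall>\<^sub>F t in at_right 0. F (X + t *\<^sub>R w) < F X" by simp
  moreover have "\<forall>\<^sub>F t in at_right 0. X + t *\<^sub>R w \<in> U"
    using chart(1) X(2) by (rule eventually_at_right_line_mem_open)
  moreover have "\<forall>\<^sub>F t in at_right 0. X \<bullet> e + t * (w \<bullet> e) + t\<^sup>2 * 0 \<le> 0"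
    using Xe dir by (intro eventually_at_right_quadratic_nonpos) auto
  ultimately show ?thesis
  proof eventually_elim
    case (elim t)
    then have "F (X + t *\<^sub>R w) \<le> 0" "(X + t *\<^sub>R w) \<bullet> e \<le> 0"
      using FX by (simp_all add: inner_add_left)
    with elim chart(5) show ?case
      by blast
  qed
qed

lemma C2_chart_zero_on_sigma:
  assumes "closed K" and ch: "C2_chart e K U F G H" and X: "X \<in> U" "X \<in> sigma K e"
  shows "F X = 0"
proof (rule ccontr)
  note chart = C2_chartD[OF ch X(1)]
  define W where "W = U \<inter> F -` {..<0}"
  assume "F X \<noteq> 0"
  moreover have "X \<in> K"
    using X(2) sigma_subset[OF \<open>closed K\<close>] by blast
  moreover have "F X \<le> 0"
    using chart(5) X(1) \<open>X \<in> K\<close> by blast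
  ultimately have "X \<in> W"
    using X(1) by (simp add: W_def)
  have "continuous_on U F"
    using C2_chartD(2)[OF ch]
    by (meson continuous_at_imp_continuous_on has_derivative_continuous)
  then have "open W"
    unfolding W_def using chart(1) by (intro continuous_open_preimage) auto
  have "W \<inter> uhalf e \<subseteq> K"
  proof
    fix y assume "y \<in> W \<inter> uhalf e"
    then have "y \<in> {y \<in> U. F y \<le> 0 \<and> y \<bullet> e \<le> 0}"
      by (simp add: W_def uhalf_def)
    with chart(5) show "y \<in> K"
      by blast
  qed
  moreover have "open (W \<inter> uhalf e)"
    using \<open>open W\<close> open_halfspace_lt[of e 0] by (simp add: uhalf_def inner_commute open_Int)
  ultimately have "W \<inter> uhalf e \<subseteq> interior K"
    by (rule interior_maximal)
  then have "W \<inter> (frontier K \<inter> uhalf e) = {}"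
    unfolding frontier_def by blast
  then have "W \<inter> sigma K e = {}"
    unfolding sigma_def using open_Int_closure_eq_empty[OF \<open>open W\<close>] by blast
  with \<open>X \<in> W\<close> X(2) show False
    by blast
qed

lemma C2_chart_supporting:
  assumes "closed K" and "convex K" and ch: "C2_chart e K U F G H"
    and X: "X \<in> U" "X \<in> sigma K e" and Y: "Y \<in> K"
  shows "G X \<bullet> (Y - X) \<le> 0"
proof (rule ccontr)
  note chart = C2_chartD[OF ch X(1)]
  have "X \<in> K"
    using X(2) sigma_subset[OF \<open>closed K\<close>] by blast
  assume "\<not> G X \<bullet> (Y - X) \<le> 0"
  moreover have "((\<lambda>s. F (X + s *\<^sub>R (Y - X))) has_real_derivative G X \<bullet> (Y - X)) (at 0)"
    using has_real_derivative_along_line[of F "\<lambda>v. G X \<bullet> v" X 0 "Y - X"] chart(2) by simp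
  ultimately have "\<forall>\<^sub>F t in at_right 0. F (X + 0 *\<^sub>R (Y - X)) < F (X + t *\<^sub>R (Y - X))"
    using has_real_derivative_pos_eventually_gt by force
  moreover have "\<forall>\<^sub>F t in at_right 0. X + t *\<^sub>R (Y - X) \<in> U"
    by (rule eventually_at_right_line_mem_open[OF chart(1) X(1)])
  moreover have "\<forall>\<^sub>F t in at_right 0. X + t *\<^sub>R (Y - X) \<in> K"
    by (rule eventually_at_right_segment_mem_convex[OF \<open>convex K\<close> \<open>X \<in> K\<close> Y])
  ultimately have "\<forall>\<^sub>F t in at_right 0. F X < F (X + t *\<^sub>R (Y - X)) \<and> X + t *\<^sub>R (Y - X) \<in> K \<inter> U"
    by eventually_elim simp
  then obtain t where "F X < F (X + t *\<^sub>R (Y - X))" "X + t *\<^sub>R (Y - X) \<in> K \<inter> U"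
    by (auto elim: eventually_at_right_obtain_pos)
  then show False
    using chart(5) C2_chart_zero_on_sigma[OF \<open>closed K\<close> ch X] by auto
qed

lemma C2_chart_tangent_step_not_mem:
  assumes "closed K" and "convex K" and ch: "C2_chart e K U F G H"
    and X: "X \<in> U" "X \<in> sigma K e"
    and tangent: "G X \<bullet> v = 0" and curved: "H X v \<bullet> v > 0"
  shows "X + v \<notin> K"
proof
  assume "X + v \<in> K"
  note chart = C2_chartD[OF ch]
  have "X \<in> K"
    using X(2) sigma_subset[OF \<open>closed K\<close>] by blast
  have "((\<lambda>y. G y \<bullet> v) has_derivative (\<lambda>u. H X u \<bullet> v)) (at X)"
    using chart(3)[OF X(1)] by (rule has_derivative_inner_left)
  then have "((\<lambda>s. G (X + s *\<^sub>R v) \<bullet> v) has_real_derivative H X v \<bullet> v) (at 0)"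
    using has_real_derivative_along_line[of "\<lambda>y. G y \<bullet> v" _ X 0 v] by simp
  from has_real_derivative_pos_eventually_gt[OF this curved]
  have "\<forall>\<^sub>F s in at_right 0. 0 < G (X + s *\<^sub>R v) \<bullet> v"
    using tangent by simp
  moreover have "\<forall>\<^sub>F s in at_right 0. X + s *\<^sub>R v \<in> U"
    by (rule eventually_at_right_line_mem_open[OF chart(1)[OF X(1)] X(1)])
  moreover have "\<forall>\<^sub>F s in at_right 0. X + s *\<^sub>R ((X + v) - X) \<in> K"
    by (rule eventually_at_right_segment_mem_convex[OF \<open>convex K\<close> \<open>X \<in> K\<close> \<open>X + v \<in> K\<close>])
  ultimately obtain d where "d > 0" and d: "\<And>s. 0 < s \<Longrightarrow> s < d \<Longrightarrow>
      0 < G (X + s *\<^sub>R v) \<bullet> v \<and> X + s *\<^sub>R v \<in> U \<and> X + s *\<^sub>R v \<in> K"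
    unfolding eventually_at_right_field by (smt (verit) add_diff_cancel_left')
  define g where "g s = F (X + s *\<^sub>R v)" for s
  have g': "(g has_real_derivative G (X + s *\<^sub>R v) \<bullet> v) (at s)" if "X + s *\<^sub>R v \<in> U" for s
    unfolding g_def using has_real_derivative_along_line[of F _ X s v] chart(2)[OF that] by simp
  have "g 0 < g (d / 2)"
  proof (rule DERIV_pos_imp_increasing_open[of 0 "d / 2" g])
    show "\<exists>y. (g has_real_derivative y) (at s) \<and> 0 < y" if "0 < s" "s < d / 2" for s
      using g' d that by force
    have "isCont g s" if "0 \<le> s" "s \<le> d / 2" for s
    proof (cases "s = 0")
      case True
      then show ?thesis using g'[of 0] X(1) by (auto intro: DERIV_isCont)
    next
      case False
      then show ?thesis using g'[of s] d[of s] that \<open>d > 0\<close> by (auto intro: DERIV_isCont)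
    qed
    then show "continuous_on {0..d / 2} g"
      by (intro continuous_at_imp_continuous_on) auto
  qed (use \<open>d > 0\<close> in simp)
  moreover have "g 0 = 0"
    unfolding g_def using C2_chart_zero_on_sigma[OF \<open>closed K\<close> ch X] by simp
  moreover have "X + (d / 2) *\<^sub>R v \<in> {y \<in> U. F y \<le> 0 \<and> y \<bullet> e \<le> 0}"
    using d[of "d / 2"] \<open>d > 0\<close> chart(5)[OF X(1)] by auto
  ultimately show False
    by (simp add: g_def)
qed

lemma cap_body_sigma_subset: "cap_body \<theta> e K \<Longrightarrow> sigma K e \<subseteq> K"
  by (simp add: cap_body_def compact_imp_closed sigma_subset)

lemma sigma_obtains_nu_chart:
  assumes "cap_body \<theta> e K" and "X \<in> sigma K e"
  obtains U F G H where "C2_chart e K U F G H" "X \<in> U" "nu e K X = G X /\<^sub>R norm (G X)"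
proof -
  have "\<exists>N U F G H. C2_chart e K U F G H \<and> X \<in> U \<and> N = G X /\<^sub>R norm (G X)"
    using assms unfolding cap_body_def by blast
  then have "\<exists>U F G H. C2_chart e K U F G H \<and> X \<in> U \<and> nu e K X = G X /\<^sub>R norm (G X)"
    unfolding nu_def by (rule someI_ex)
  with that show ?thesis
    by blast
qed

lemma norm_nu:
  assumes "cap_body \<theta> e K" and "X \<in> sigma K e"
  shows "norm (nu e K X) = 1"
proof -
  obtain U F G H where ch: "C2_chart e K U F G H" and "X \<in> U" "nu e K X = G X /\<^sub>R norm (G X)"
    using sigma_obtains_nu_chart[OF assms] .
  then show ?thesis
    using C2_chartD(4)[OF ch] by simp
qed

lemma nu_supporting:
  assumes cb: "cap_body \<theta> e K" and X: "X \<in> sigma K e" and Y: "Y \<in> K"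
  shows "Y \<bullet> nu e K X \<le> X \<bullet> nu e K X"
proof -
  obtain U F G H where ch: "C2_chart e K U F G H" and "X \<in> U" "nu e K X = G X /\<^sub>R norm (G X)"
    using sigma_obtains_nu_chart[OF cb X] .
  moreover have "closed K" "convex K"
    using cb by (auto simp: cap_body_def compact_imp_closed)
  ultimately have "(Y - X) \<bullet> G X \<le> 0" "nu e K X = G X /\<^sub>R norm (G X)"
    using C2_chart_supporting[OF _ _ ch _ X Y] by (auto simp: inner_commute)
  then have "(Y - X) \<bullet> nu e K X \<le> 0"
    by (simp add: mult_nonneg_nonpos)
  then show ?thesis
    by (simp add: inner_diff_left)
qed

lemma nu_eventually_mem:
  assumes cb: "cap_body \<theta> e K" and X: "X \<in> sigma K e"
    and w: "nu e K X \<bullet> w < 0" and dir: "X \<bullet> e < 0 \<or> w \<bullet> e < 0"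
  shows "\<forall>\<^sub>F t in at_right 0. X + t *\<^sub>R w \<in> K"
proof -
  obtain U F G H where ch: "C2_chart e K U F G H" and "X \<in> U" "nu e K X = G X /\<^sub>R norm (G X)"
    using sigma_obtains_nu_chart[OF cb X] .
  moreover have "X \<in> K"
    using X cap_body_sigma_subset[OF cb] by blast
  moreover have "G X \<bullet> w < 0"
    using w \<open>nu e K X = _\<close> C2_chartD(4)[OF ch \<open>X \<in> U\<close>] by (simp add: mult_less_0_iff)
  ultimately show ?thesis
    using C2_chart_eventually_mem[OF ch _ _ _ dir] by blast
qed

lemma interior_subset_uhalf:
  assumes "e \<noteq> 0" and "K \<subseteq> cuhalf e"
  shows "interior K \<subseteq> uhalf e"
proof -
  have "cuhalf e = {x. e \<bullet> x \<le> 0}" "uhalf e = {x. e \<bullet> x < 0}"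
    by (auto simp: cuhalf_def uhalf_def inner_commute)
  then show ?thesis
    using interior_mono[OF assms(2)] interior_halfspace_le[OF assms(1)] by simp
qed

lemma ball_inter_uhalf_subset_of_not_sigma:
  assumes "e \<noteq> 0" and "convex K" and "interior K \<noteq> {}" and "K \<subseteq> cuhalf e"
    and X: "X \<in> K" "X \<notin> sigma K e"
  obtains r where "0 < r" "ball X r \<inter> uhalf e \<subseteq> K"
proof -
  obtain r where "0 < r" and "\<forall>y\<in>frontier K \<inter> uhalf e. \<not> dist y X < r"
    using X(2) unfolding sigma_def closure_approachable by blast
  then have far: "ball X r \<inter> (frontier K \<inter> uhalf e) = {}"
    by (auto simp: dist_commute)
  have "X \<in> closure (interior K)"
    using convex_closure_interior[OF assms(2,3)] X(1) closure_subset by blast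
  then obtain z where z: "z \<in> interior K" "dist z X < r"
    using \<open>0 < r\<close> unfolding closure_approachable by blast
  have "connected (ball X r \<inter> uhalf e)"
    by (intro convex_connected convex_Int convex_ball)
      (simp add: uhalf_def inner_commute[of _ e] convex_halfspace_lt)
  moreover have "z \<in> (ball X r \<inter> uhalf e) \<inter> K"
    using z interior_subset interior_subset_uhalf[OF assms(1,4)] by (auto simp: dist_commute)
  ultimately have "ball X r \<inter> uhalf e - K = {}"
    using connected_Int_frontier[of "ball X r \<inter> uhalf e" K] far by blast
  with \<open>0 < r\<close> that show ?thesis
    by blast
qed

lemma maximizer_mem_sigma:
  assumes e: "norm e = 1" and cb: "cap_body \<theta> e K" and \<nu>: "norm \<nu> = 1" "\<nu> \<bullet> e < 1"
    and X: "X \<in> K" and max: "\<forall>Y\<in>K. Y \<bullet> \<nu> \<le> X \<bullet> \<nu>"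
  shows "X \<in> sigma K e"
proof (rule ccontr)
  have K: "convex K" "interior K \<noteq> {}" "K \<subseteq> cuhalf e"
    using cb by (auto simp: cap_body_def)
  assume "X \<notin> sigma K e"
  moreover have "e \<noteq> 0"
    using e by auto
  ultimately obtain r where "0 < r" and r: "ball X r \<inter> uhalf e \<subseteq> K"
    using ball_inter_uhalf_subset_of_not_sigma[OF _ K X] by blast
  define w where "w = \<nu> - e"
  have "w \<bullet> e < 0"
    using e \<nu> by (simp add: w_def inner_diff_left dot_square_norm)
  have "X \<bullet> e \<le> 0"
    using X K(3) by (auto simp: cuhalf_def)
  have "\<forall>\<^sub>F t in at_right 0. X + t *\<^sub>R w \<in> ball X r"
    using \<open>0 < r\<close> by (intro eventually_at_right_line_mem_open) auto
  then have "\<forall>\<^sub>F t in at_right 0. X + t *\<^sub>R w \<in> K"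
    using eventually_at_right_less[of 0]
  proof eventually_elim
    case (elim t)
    then have "(X + t *\<^sub>R w) \<bullet> e < 0"
      using \<open>w \<bullet> e < 0\<close> \<open>X \<bullet> e \<le> 0\<close> by (simp add: inner_add_left mult_pos_neg add_nonpos_neg)
    with elim r show ?case
      by (auto simp: uhalf_def)
  qed
  then have "w \<bullet> \<nu> \<le> 0"
    using max by (rule inner_nonpos_of_eventually_mem_maximizer)
  moreover have "w \<bullet> \<nu> = 1 - \<nu> \<bullet> e"
    using \<nu>(1) by (simp add: w_def inner_diff_left inner_commute[of e \<nu>] dot_square_norm)
  ultimately show False
    using \<nu> by simp
qed

lemma unit_vectors_separating_direction:
  fixes N \<nu> e :: "'a::real_inner"
  assumes N: "norm N = 1" and \<nu>: "norm \<nu> = 1" and e: "norm e = 1" and "N \<noteq> \<nu>"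
  obtains w where "N \<bullet> w < 0" "0 < w \<bullet> \<nu>" "w \<bullet> e < \<nu> \<bullet> e - N \<bullet> e"
proof -
  have unit: "\<nu> \<bullet> \<nu> = 1" "N \<bullet> N = 1" "e \<bullet> e = 1"
    using \<nu> N e by (simp_all add: dot_square_norm)
  have "0 < (\<nu> - N) \<bullet> (\<nu> - N)"
    using \<open>N \<noteq> \<nu>\<close> by simp
  moreover have "(\<nu> - N) \<bullet> (\<nu> - N) = 2 - 2 * (\<nu> \<bullet> N)"
    using unit by (simp add: inner_diff_left inner_diff_right inner_commute[of N \<nu>])
  ultimately have "\<nu> \<bullet> N < 1"
    by simp
  define d where "d = 1 - \<nu> \<bullet> N"
  define w where "w = \<nu> - N - (d / 2) *\<^sub>R e"
  have "d > 0"
    using \<open>\<nu> \<bullet> N < 1\<close> by (simp add: d_def)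
  have "\<bar>N \<bullet> e\<bar> \<le> 1" "\<bar>\<nu> \<bullet> e\<bar> \<le> 1"
    using Cauchy_Schwarz_ineq2[of N e] Cauchy_Schwarz_ineq2[of \<nu> e] N \<nu> e by simp_all
  have "N \<bullet> w = - d - (d / 2) * (N \<bullet> e)"
    using unit by (simp add: w_def d_def inner_diff_right inner_commute[of N \<nu>])
  moreover have "(d / 2) * (- 1) \<le> (d / 2) * (N \<bullet> e)"
    using \<open>d > 0\<close> \<open>\<bar>N \<bullet> e\<bar> \<le> 1\<close> by (intro mult_left_mono) auto
  ultimately have "N \<bullet> w < 0"
    using \<open>d > 0\<close> by linarith
  moreover have "w \<bullet> \<nu> = d - (d / 2) * (\<nu> \<bullet> e)"
    using unit by (simp add: w_def d_def inner_diff_left inner_commute[of N \<nu>] inner_commute[of e \<nu>])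
  moreover have "(d / 2) * (\<nu> \<bullet> e) \<le> d / 2"
    using \<open>d > 0\<close> \<open>\<bar>\<nu> \<bullet> e\<bar> \<le> 1\<close> by (simp add: mult_left_le)
  moreover have "w \<bullet> e = \<nu> \<bullet> e - N \<bullet> e - d / 2"
    using unit by (simp add: w_def inner_diff_left)
  ultimately show ?thesis
    using that \<open>d > 0\<close> by simp
qed

lemma nu_maximizer:
  assumes e: "norm e = 1" and cb: "cap_body \<theta> e K" and \<nu>: "norm \<nu> = 1" "\<nu> \<bullet> e \<le> - cos \<theta>"
    and X: "X \<in> sigma K e" and max: "\<forall>Y\<in>K. Y \<bullet> \<nu> \<le> X \<bullet> \<nu>"
  shows "nu e K X = \<nu>"
proof (rule ccontr)
  assume "nu e K X \<noteq> \<nu>"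
  then obtain w where Nw: "nu e K X \<bullet> w < 0" and "0 < w \<bullet> \<nu>"
    and we: "w \<bullet> e < \<nu> \<bullet> e - nu e K X \<bullet> e"
    using unit_vectors_separating_direction[OF norm_nu[OF cb X] \<nu>(1) e] by blast
  have "X \<bullet> e < 0 \<or> w \<bullet> e < 0"
  proof (cases "X \<bullet> e < 0")
    case False
    have "X \<in> cuhalf e"
      using X cap_body_sigma_subset[OF cb] cb unfolding cap_body_def by blast
    with False have "X \<bullet> e = 0"
      by (simp add: cuhalf_def)
    then have "nu e K X \<bullet> e = cos (pi - \<theta>)"
      using cb X unfolding cap_body_def by blast
    with we \<nu>(2) show ?thesis
      by simp
  qed simp
  with Nw have "\<forall>\<^sub>F t in at_right 0. X + t *\<^sub>R w \<in> K"
    by (intro nu_eventually_mem[OF cb X])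
  then have "w \<bullet> \<nu> \<le> 0"
    using max by (rule inner_nonpos_of_eventually_mem_maximizer)
  with \<open>0 < w \<bullet> \<nu>\<close> show False
    by simp
qed

lemma C2_chart_normal_at_maximizer:
  assumes e: "norm e = 1" and cb: "cap_body \<theta> e K" and \<nu>: "norm \<nu> = 1" "\<nu> \<bullet> e < 1"
    and ch: "C2_chart e K U F G H" and X: "X \<in> U" "X \<in> sigma K e"
    and max: "\<forall>Y\<in>K. Y \<bullet> \<nu> \<le> X \<bullet> \<nu>" and Y: "Y \<in> K" "Y \<bullet> \<nu> = X \<bullet> \<nu>"
  shows "G X \<bullet> (Y - X) = 0"
proof (rule ccontr)
  define v where "v = Y - X"
  have K: "closed K" "convex K" "K \<subseteq> cuhalf e"
    using cb by (simp_all add: cap_body_def compact_imp_closed)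
  have "X \<in> K"
    using X(2) sigma_subset[OF K(1)] by blast
  assume "G X \<bullet> (Y - X) \<noteq> 0"
  then have "G X \<bullet> v < 0"
    using C2_chart_supporting[OF K(1,2) ch X Y(1)] by (simp add: v_def)
  have "((\<lambda>\<epsilon>. G X \<bullet> (v + \<epsilon> *\<^sub>R (\<nu> - e))) \<longlongrightarrow> G X \<bullet> (v + 0 *\<^sub>R (\<nu> - e))) (at_right 0)"
    by (intro tendsto_intros)
  then have "\<forall>\<^sub>F \<epsilon> in at_right 0. G X \<bullet> (v + \<epsilon> *\<^sub>R (\<nu> - e)) < 0"
    using \<open>G X \<bullet> v < 0\<close> by (auto dest: order_tendstoD(2)[where a = 0])
  then obtain \<epsilon> :: real where "0 < \<epsilon>" and Gw: "G X \<bullet> (v + \<epsilon> *\<^sub>R (\<nu> - e)) < 0"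
    by (rule eventually_at_right_obtain_pos)
  define w where "w = v + \<epsilon> *\<^sub>R (\<nu> - e)"
  have "X \<bullet> e < 0 \<or> w \<bullet> e < 0"
  proof (cases "X \<bullet> e < 0")
    case False
    then have "v \<bullet> e \<le> 0"
      using Y(1) \<open>X \<in> K\<close> K(3) by (auto simp: v_def cuhalf_def inner_diff_left)
    moreover have "\<epsilon> * (\<nu> \<bullet> e - e \<bullet> e) < 0"
      using \<open>0 < \<epsilon>\<close> \<nu> e by (simp add: mult_pos_neg dot_square_norm)
    ultimately show ?thesis
      by (simp add: w_def inner_add_left inner_diff_left)
  qed simp
  with Gw have "\<forall>\<^sub>F t in at_right 0. X + t *\<^sub>R w \<in> K"
    unfolding w_def by (intro C2_chart_eventually_mem[OF ch \<open>X \<in> K\<close> X(1)])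
  then have "w \<bullet> \<nu> \<le> 0"
    using max by (rule inner_nonpos_of_eventually_mem_maximizer)
  moreover have "w \<bullet> \<nu> = \<epsilon> * (\<nu> \<bullet> \<nu> - \<nu> \<bullet> e)"
    using Y(2) by (simp add: w_def v_def inner_add_left inner_diff_left inner_commute[of e \<nu>])
  ultimately show False
    using \<open>0 < \<epsilon>\<close> \<nu> by (simp add: mult_le_0_iff dot_square_norm)
qed

lemma sigma_maximizer_unique:
  assumes e: "norm e = 1" and cb: "cap_body \<theta> e K" and \<nu>: "norm \<nu> = 1" "\<nu> \<bullet> e < 1"
    and X: "X \<in> sigma K e" and max: "\<forall>Y\<in>K. Y \<bullet> \<nu> \<le> X \<bullet> \<nu>"
    and Y: "Y \<in> K" "Y \<bullet> \<nu> = X \<bullet> \<nu>"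
  shows "Y = X"
proof (rule ccontr)
  assume "Y \<noteq> X"
  have K: "closed K" "convex K"
    using cb by (simp_all add: cap_body_def compact_imp_closed)
  obtain U F G H where ch: "C2_chart e K U F G H" and "X \<in> U"
    and curved: "\<forall>v. v \<noteq> 0 \<and> v \<bullet> G X = 0 \<longrightarrow> H X v \<bullet> v > 0"
    using cb X unfolding cap_body_def by blast
  (* This chart need not be the one chosen by nu, so the tangency of Y - X is derived from
     maximality rather than from nu e K X = \<nu>. *)
  have "G X \<bullet> (Y - X) = 0"
    by (rule C2_chart_normal_at_maximizer[OF e cb \<nu> ch \<open>X \<in> U\<close> X max Y])
  moreover have "H X (Y - X) \<bullet> (Y - X) > 0"
    using curved \<open>Y \<noteq> X\<close> \<open>G X \<bullet> (Y - X) = 0\<close> by (simp add: inner_commute)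
  ultimately have "X + (Y - X) \<notin> K"
    by (rule C2_chart_tangent_step_not_mem[OF K ch \<open>X \<in> U\<close> X])
  then show False
    using Y(1) by simp
qed

lemma supp_eq_inner_maximizer:
  assumes e: "norm e = 1" and \<theta>: "0 < \<theta>" "\<theta> < pi" and cb: "cap_body \<theta> e K"
    and \<xi>: "\<xi> \<in> capC \<theta> e"
  obtains X where "X \<in> K" "\<forall>Y\<in>K. Y \<bullet> (\<xi> - cos \<theta> *\<^sub>R e) \<le> X \<bullet> (\<xi> - cos \<theta> *\<^sub>R e)"
    "supp \<theta> e K \<xi> = X \<bullet> (\<xi> - cos \<theta> *\<^sub>R e)"
proof -
  define \<nu> where "\<nu> = \<xi> - cos \<theta> *\<^sub>R e"
  have \<nu>: "norm \<nu> = 1" "\<nu> \<bullet> e \<le> - cos \<theta>"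
    using \<xi> e by (simp_all add: \<nu>_def capC_def inner_diff_left dot_square_norm)
  moreover have "- 1 < cos \<theta>"
    using cos_monotone_0_pi[of \<theta> pi] \<theta> by simp
  ultimately have "\<nu> \<bullet> e < 1"
    by linarith
  have "compact K" "K \<noteq> {}"
    using cb by (auto simp: cap_body_def)
  moreover have "continuous_on K (\<lambda>Y. Y \<bullet> \<nu>)"
    by (intro continuous_intros)
  ultimately obtain X where X: "X \<in> K" and max: "\<forall>Y\<in>K. Y \<bullet> \<nu> \<le> X \<bullet> \<nu>"
    using continuous_attains_sup by blast
  have "X \<in> sigma K e"
    by (rule maximizer_mem_sigma[OF e cb \<nu>(1) \<open>\<nu> \<bullet> e < 1\<close> X max])
  have "(THE X. X \<in> sigma K e \<and> nu e K X + cos \<theta> *\<^sub>R e = \<xi>) = X"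
  proof (rule the_equality)
    show "X \<in> sigma K e \<and> nu e K X + cos \<theta> *\<^sub>R e = \<xi>"
      using \<open>X \<in> sigma K e\<close> nu_maximizer[OF e cb \<nu> \<open>X \<in> sigma K e\<close> max] by (simp add: \<nu>_def)
  next
    fix X' assume X': "X' \<in> sigma K e \<and> nu e K X' + cos \<theta> *\<^sub>R e = \<xi>"
    then have "X \<bullet> \<nu> \<le> X' \<bullet> \<nu>"
      using nu_supporting[OF cb _ X] by (force simp: \<nu>_def)
    moreover have "X' \<in> K"
      using X' cap_body_sigma_subset[OF cb] by blast
    ultimately show "X' = X"
      using sigma_maximizer_unique[OF e cb \<nu>(1) \<open>\<nu> \<bullet> e < 1\<close> \<open>X \<in> sigma K e\<close> max] max
      by (meson order_antisym)
  qed
  with X max that show ?thesis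
    by (simp add: supp_def \<nu>_def)
qed

lemma inner_le_supp:
  assumes "norm e = 1" and "0 < \<theta>" "\<theta> < pi" and "cap_body \<theta> e K"
    and "\<xi> \<in> capC \<theta> e" and "Y \<in> K"
  shows "Y \<bullet> (\<xi> - cos \<theta> *\<^sub>R e) \<le> supp \<theta> e K \<xi>"
  using supp_eq_inner_maximizer[OF assms(1-5)] assms(6) by metis

lemma supp_lipschitz_on_capC:
  assumes "norm e = 1" and "0 < \<theta>" "\<theta> < pi" and cb: "cap_body \<theta> e K"
    and "K \<subseteq> cball 0 R" and "0 \<le> R"
  shows "R-lipschitz_on (capC \<theta> e) (supp \<theta> e K)"
proof (rule lipschitz_on_support_function[where p = "cos \<theta> *\<^sub>R e" and K = K])
  fix \<xi> assume "\<xi> \<in> capC \<theta> e"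
  then obtain X where "X \<in> K" "\<forall>Y\<in>K. Y \<bullet> (\<xi> - cos \<theta> *\<^sub>R e) \<le> X \<bullet> (\<xi> - cos \<theta> *\<^sub>R e)"
    "supp \<theta> e K \<xi> = X \<bullet> (\<xi> - cos \<theta> *\<^sub>R e)"
    using supp_eq_inner_maximizer assms by metis
  then show "\<exists>X\<in>K. supp \<theta> e K \<xi> = X \<bullet> (\<xi> - cos \<theta> *\<^sub>R e)"
    and "\<And>Y. Y \<in> K \<Longrightarrow> Y \<bullet> (\<xi> - cos \<theta> *\<^sub>R e) \<le> supp \<theta> e K \<xi>"
    by auto
qed fact+

lemma equator_mem_capC:
  assumes e: "norm e = 1" and w: "norm w = 1" "w \<bullet> e = 0"
  shows "sin \<theta> *\<^sub>R w \<in> capC \<theta> e"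
proof -
  have "e \<bullet> e = 1" "w \<bullet> w = 1"
    using e w by (simp_all add: dot_square_norm)
  then have "(norm (sin \<theta> *\<^sub>R w - cos \<theta> *\<^sub>R e))\<^sup>2 = (sin \<theta>)\<^sup>2 + (cos \<theta>)\<^sup>2"
    unfolding power2_norm_eq_inner using w(2)
    by (simp add: inner_diff_left inner_diff_right inner_commute[of e w] power2_eq_square)
  then have "(norm (sin \<theta> *\<^sub>R w - cos \<theta> *\<^sub>R e))\<^sup>2 = 1\<^sup>2"
    by simp
  then have "norm (sin \<theta> *\<^sub>R w - cos \<theta> *\<^sub>R e) = 1"
    using power2_eq_iff_nonneg[of "norm (sin \<theta> *\<^sub>R w - cos \<theta> *\<^sub>R e)" 1] by simp
  with w show ?thesis
    by (simp add: capC_def)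
qed

lemma norm_le_of_inner_capC_le:
  assumes e: "norm e = 1" and \<theta>: "0 < \<theta>" "\<theta> < pi" and Ye: "Y \<bullet> e \<le> 0"
    and B: "\<And>\<xi>. \<xi> \<in> capC \<theta> e \<Longrightarrow> Y \<bullet> (\<xi> - cos \<theta> *\<^sub>R e) \<le> B"
  shows "norm Y \<le> B + 2 * B / sin \<theta>"
proof -
  define s where "s = - (Y \<bullet> e)"
  define YT where "YT = Y - (Y \<bullet> e) *\<^sub>R e"
  have ee: "e \<bullet> e = 1"
    using e by (simp add: dot_square_norm)
  have "(cos \<theta> - 1) *\<^sub>R e \<in> capC \<theta> e"
    using e ee cos_le_one[of \<theta>] by (simp add: capC_def algebra_simps)
  from B[OF this] have "s \<le> B"
    by (simp add: s_def algebra_simps)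
  have "s \<ge> 0"
    using Ye by (simp add: s_def)
  have "sin \<theta> * norm YT \<le> 2 * B"
  proof (cases "YT = 0")
    case True
    then show ?thesis
      using \<open>s \<le> B\<close> \<open>s \<ge> 0\<close> by simp
  next
    case False
    define w where "w = YT /\<^sub>R norm YT"
    have "YT \<bullet> e = 0" "Y \<bullet> YT = YT \<bullet> YT"
      using ee by (simp_all add: YT_def inner_diff_left inner_diff_right inner_commute[of e Y])
    then have "Y \<bullet> (sin \<theta> *\<^sub>R w - cos \<theta> *\<^sub>R e) = sin \<theta> * norm YT + cos \<theta> * s"
      using False by (simp add: w_def s_def inner_diff_right dot_square_norm power2_eq_square)
    moreover have "sin \<theta> *\<^sub>R w \<in> capC \<theta> e"
      using False \<open>YT \<bullet> e = 0\<close> by (intro equator_mem_capC[OF e]) (simp_all add: w_def)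
    ultimately have "sin \<theta> * norm YT + cos \<theta> * s \<le> B"
      using B by metis
    moreover have "- cos \<theta> * s \<le> s"
      using mult_right_mono[of "- cos \<theta>" 1 s] \<open>s \<ge> 0\<close> cos_ge_minus_one[of \<theta>] by simp
    ultimately show ?thesis
      using \<open>s \<le> B\<close> by linarith
  qed
  then have "norm YT \<le> 2 * B / sin \<theta>"
    using sin_gt_zero[OF \<theta>] by (simp add: pos_le_divide_eq mult.commute)
  moreover have "norm Y \<le> norm YT + s"
    using norm_triangle_ineq[of YT "(Y \<bullet> e) *\<^sub>R e"] e Ye by (simp add: YT_def s_def)
  ultimately show ?thesis
    using \<open>s \<le> B\<close> by linarith
qed

lemma cap_body_subset_cball:
  assumes e: "norm e = 1" and \<theta>: "0 < \<theta>" "\<theta> < pi" and cb: "cap_body \<theta> e K"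
    and M: "\<forall>\<xi> \<in> capC \<theta> e. \<bar>supp \<theta> e K \<xi>\<bar> \<le> M"
  shows "K \<subseteq> cball 0 (\<bar>M\<bar> + 2 * \<bar>M\<bar> / sin \<theta>)"
proof
  fix Y assume "Y \<in> K"
  moreover have "Y \<bullet> e \<le> 0"
    using cb \<open>Y \<in> K\<close> by (auto simp: cap_body_def cuhalf_def)
  moreover have "Y \<bullet> (\<xi> - cos \<theta> *\<^sub>R e) \<le> \<bar>M\<bar>" if "\<xi> \<in> capC \<theta> e" for \<xi>
    using inner_le_supp[OF e \<theta> cb that \<open>Y \<in> K\<close>] M that by force
  ultimately show "Y \<in> cball 0 (\<bar>M\<bar> + 2 * \<bar>M\<bar> / sin \<theta>)"
    using norm_le_of_inner_capC_le[OF e \<theta>, of Y "\<bar>M\<bar>"] by simp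
qed

section \<open>Gradients on the cap\<close>

definition cap_radial_proj :: "real \<Rightarrow> real^'n \<Rightarrow> real^'n \<Rightarrow> real^'n" where
  "cap_radial_proj \<theta> e x = cos \<theta> *\<^sub>R e + (x - cos \<theta> *\<^sub>R e) /\<^sub>R norm (x - cos \<theta> *\<^sub>R e)"

lemma mem_capcone_iff:
  "x \<in> capcone \<theta> e \<longleftrightarrow> x \<noteq> cos \<theta> *\<^sub>R e \<and> cap_radial_proj \<theta> e x \<in> capC \<theta> e"
  by (simp add: capcone_def cap_radial_proj_def)

lemma ext0_eq: "ext0 \<theta> e h x = h (cap_radial_proj \<theta> e x)"
  by (simp add: ext0_def cap_radial_proj_def)

lemma norm_capC_diff: "\<xi> \<in> capC \<theta> e \<Longrightarrow> norm (\<xi> - cos \<theta> *\<^sub>R e) = 1"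
  by (simp add: capC_def)

lemma ray_mem_capcone:
  assumes \<xi>: "\<xi> \<in> capC \<theta> e" and t: "t > -1"
  shows "\<xi> + t *\<^sub>R (\<xi> - cos \<theta> *\<^sub>R e) \<in> capcone \<theta> e"
    and "ext0 \<theta> e h (\<xi> + t *\<^sub>R (\<xi> - cos \<theta> *\<^sub>R e)) = h \<xi>"
proof -
  have "\<xi> + t *\<^sub>R (\<xi> - cos \<theta> *\<^sub>R e) - cos \<theta> *\<^sub>R e = (1 + t) *\<^sub>R (\<xi> - cos \<theta> *\<^sub>R e)"
    by (simp add: algebra_simps)
  moreover have "norm ((1 + t) *\<^sub>R (\<xi> - cos \<theta> *\<^sub>R e)) = 1 + t"
    using norm_capC_diff[OF \<xi>] t by simp
  ultimately have "\<xi> + t *\<^sub>R (\<xi> - cos \<theta> *\<^sub>R e) \<noteq> cos \<theta> *\<^sub>R e"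
    and "cap_radial_proj \<theta> e (\<xi> + t *\<^sub>R (\<xi> - cos \<theta> *\<^sub>R e)) = \<xi>"
    using t by (auto simp: cap_radial_proj_def)
  then show "\<xi> + t *\<^sub>R (\<xi> - cos \<theta> *\<^sub>R e) \<in> capcone \<theta> e"
    and "ext0 \<theta> e h (\<xi> + t *\<^sub>R (\<xi> - cos \<theta> *\<^sub>R e)) = h \<xi>"
    using \<xi> by (simp_all add: mem_capcone_iff ext0_eq)
qed

lemma capC_subset_capcone: "capC \<theta> e \<subseteq> capcone \<theta> e"
  using ray_mem_capcone(1)[of _ \<theta> e 0] by auto

lemma ext0_capC: "\<xi> \<in> capC \<theta> e \<Longrightarrow> ext0 \<theta> e h \<xi> = h \<xi>"
  using ray_mem_capcone(2)[of \<xi> \<theta> e 0] by simp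

lemma ext0_lipschitz_at_capC:
  assumes lip: "R-lipschitz_on (capC \<theta> e) h" and \<xi>: "\<xi> \<in> capC \<theta> e" and x: "x \<in> capcone \<theta> e"
  shows "\<bar>ext0 \<theta> e h x - ext0 \<theta> e h \<xi>\<bar> \<le> 2 * R * norm (x - \<xi>)"
proof -
  let ?p = "cos \<theta> *\<^sub>R e"
  have "\<bar>ext0 \<theta> e h x - ext0 \<theta> e h \<xi>\<bar> \<le> R * norm (cap_radial_proj \<theta> e x - \<xi>)"
    using lipschitz_on_normD[OF lip, of "cap_radial_proj \<theta> e x" \<xi>] x \<xi>
    by (simp add: mem_capcone_iff ext0_capC[OF \<xi>] ext0_eq[of _ _ _ x])
  also have "cap_radial_proj \<theta> e x - \<xi> = (x - ?p) /\<^sub>R norm (x - ?p) - (\<xi> - ?p)"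
    by (simp add: cap_radial_proj_def)
  also have "R * norm \<dots> \<le> R * (2 * norm ((x - ?p) - (\<xi> - ?p)))"
    using x norm_capC_diff[OF \<xi>] lipschitz_on_nonneg[OF lip]
    by (intro mult_left_mono norm_scaleR_inverse_norm_diff_le) (auto simp: mem_capcone_iff)
  finally show ?thesis by simp
qed

lemma tangent_step_mem_capcone:
  assumes e: "norm e = 1" and \<xi>: "\<xi> \<in> capC \<theta> e"
    and u: "u \<bullet> (\<xi> - cos \<theta> *\<^sub>R e) = 0"
    and t: "\<xi> \<bullet> e + t * (u \<bullet> e) + t\<^sup>2 * (norm u)\<^sup>2 \<le> 0"
  shows "\<xi> + t *\<^sub>R u \<in> capcone \<theta> e"
proof -
  define c where "c = cos \<theta>"
  define n where "n = \<xi> - c *\<^sub>R e"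
  define a where "a = n + t *\<^sub>R u"
  define s where "s = norm a"
  have n: "n \<bullet> n = 1"
    using norm_capC_diff[OF \<xi>] by (simp add: n_def c_def dot_square_norm)
  have "s\<^sup>2 = n \<bullet> n + 2 * t * (u \<bullet> n) + t\<^sup>2 * (u \<bullet> u)"
    unfolding s_def a_def power2_norm_eq_inner
    by (simp add: inner_add_left inner_add_right inner_commute[of n u] power2_eq_square algebra_simps)
  then have ss: "s\<^sup>2 = 1 + t\<^sup>2 * (norm u)\<^sup>2"
    using n u by (simp add: n_def c_def dot_square_norm)
  then have s1: "1 \<le> s"
    by (metis le_add_same_cancel1 norm_ge_zero one_power2 power2_le_imp_le s_def zero_le_mult_iff zero_le_power2)
  moreover have "s \<le> s\<^sup>2"
    using s1 by (simp add: power2_eq_square mult_le_cancel_left1)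
  ultimately have s: "1 \<le> s" "s - 1 \<le> t\<^sup>2 * (norm u)\<^sup>2"
    using ss by auto
  have "c * (s - 1) \<le> 1 * (s - 1)"
    using s by (intro mult_right_mono) (auto simp: c_def)
  then have "c * s - c \<le> s - 1"
    by (simp add: algebra_simps)
  moreover have "a \<bullet> e = \<xi> \<bullet> e - c + t * (u \<bullet> e)"
    using e by (simp add: a_def n_def inner_add_left inner_diff_left dot_square_norm)
  ultimately have "c * s + a \<bullet> e \<le> 0"
    using s t by linarith
  moreover have "(c *\<^sub>R e + a /\<^sub>R s) \<bullet> e = (c * s + a \<bullet> e) / s"
    using e s by (simp add: inner_add_left dot_square_norm divide_inverse_commute distrib_left)
  ultimately have "(c *\<^sub>R e + a /\<^sub>R s) \<bullet> e \<le> 0"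
    using s by (simp add: divide_nonpos_pos)
  moreover have "\<xi> + t *\<^sub>R u - c *\<^sub>R e = a"
    by (simp add: a_def n_def algebra_simps)
  moreover have "norm (a /\<^sub>R s) = 1"
  proof -
    have "a \<noteq> 0" using s by (auto simp: s_def)
    then show ?thesis by (simp add: s_def)
  qed
  ultimately show ?thesis
    using s by (auto simp: mem_capcone_iff capC_def cap_radial_proj_def c_def s_def)
qed

lemma sgrad_has_derivative:
  assumes "ext0 \<theta> e h differentiable (at x within capcone \<theta> e)"
  shows "(ext0 \<theta> e h has_derivative (\<lambda>u. sgrad \<theta> e h x \<bullet> u)) (at x within capcone \<theta> e)"
proof -
  obtain D where D: "(ext0 \<theta> e h has_derivative D) (at x within capcone \<theta> e)"
    using assms by (auto simp: differentiable_def)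
  have "D = (\<lambda>u. adjoint D 1 \<bullet> u)"
    using adjoint_works[OF has_derivative_linear[OF D], of _ 1] by (auto simp: inner_commute)
  with D have "\<exists>v. (ext0 \<theta> e h has_derivative (\<lambda>u. v \<bullet> u)) (at x within capcone \<theta> e)"
    by metis
  then show ?thesis
    unfolding sgrad_def by (rule someI_ex)
qed

lemma sgrad_inner_normal:
  assumes \<xi>: "\<xi> \<in> capC \<theta> e" and diff: "ext0 \<theta> e h differentiable (at \<xi> within capcone \<theta> e)"
  shows "sgrad \<theta> e h \<xi> \<bullet> (\<xi> - cos \<theta> *\<^sub>R e) = 0"
proof -
  have "\<bar>sgrad \<theta> e h \<xi> \<bullet> (\<xi> - cos \<theta> *\<^sub>R e)\<bar> \<le> 0"
  proof (rule has_derivative_abs_le_at_right[OF sgrad_has_derivative[OF diff]])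
    show "\<forall>\<^sub>F t in at_right 0. \<xi> + t *\<^sub>R (\<xi> - cos \<theta> *\<^sub>R e) \<in> capcone \<theta> e \<and>
        \<bar>ext0 \<theta> e h (\<xi> + t *\<^sub>R (\<xi> - cos \<theta> *\<^sub>R e)) - ext0 \<theta> e h \<xi>\<bar> \<le> 0 * t"
      using eventually_at_right_less[of 0]
      by eventually_elim (simp add: ray_mem_capcone \<xi> ext0_capC)
  qed
  then show ?thesis by simp
qed

lemma abs_sgrad_inner_tangent_le:
  assumes e: "norm e = 1" and lip: "R-lipschitz_on (capC \<theta> e) h" and \<xi>: "\<xi> \<in> capC \<theta> e"
    and diff: "ext0 \<theta> e h differentiable (at \<xi> within capcone \<theta> e)"
    and u: "u \<bullet> (\<xi> - cos \<theta> *\<^sub>R e) = 0" and dir: "\<xi> \<bullet> e < 0 \<or> u \<bullet> e < 0"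
  shows "\<bar>sgrad \<theta> e h \<xi> \<bullet> u\<bar> \<le> 2 * R * norm u"
proof (rule has_derivative_abs_le_at_right[OF sgrad_has_derivative[OF diff]])
  have "\<forall>\<^sub>F t in at_right 0. \<xi> \<bullet> e + t * (u \<bullet> e) + t\<^sup>2 * (norm u)\<^sup>2 \<le> 0"
    using \<xi> dir by (intro eventually_at_right_quadratic_nonpos) (auto simp: capC_def)
  then show "\<forall>\<^sub>F t in at_right 0. \<xi> + t *\<^sub>R u \<in> capcone \<theta> e \<and>
      \<bar>ext0 \<theta> e h (\<xi> + t *\<^sub>R u) - ext0 \<theta> e h \<xi>\<bar> \<le> 2 * R * norm u * t"
    using eventually_at_right_less[of 0]
  proof eventually_elim
    case (elim t)
    then have "\<xi> + t *\<^sub>R u \<in> capcone \<theta> e"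
      by (intro tangent_step_mem_capcone[OF e \<xi> u])
    with ext0_lipschitz_at_capC[OF lip \<xi> this] elim show ?case
      by (simp add: mult.commute mult.left_commute)
  qed
qed

(* At a boundary point a tangent vector orthogonal to e need not point into C_theta; subtracting
   the tangential part of e, which is nonzero there because sin theta > 0, repairs this. *)
lemma inward_tangent_dominating:
  assumes e: "norm e = 1" and \<theta>: "0 < \<theta>" "\<theta> < pi" and \<xi>: "\<xi> \<in> capC \<theta> e"
    and v: "v \<bullet> (\<xi> - cos \<theta> *\<^sub>R e) = 0"
  obtains u where "u \<bullet> (\<xi> - cos \<theta> *\<^sub>R e) = 0" "\<xi> \<bullet> e < 0 \<or> u \<bullet> e < 0"
    "norm u \<le> norm v + 1" "(norm v)\<^sup>2 \<le> \<bar>v \<bullet> u\<bar>"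
proof -
  define n where "n = \<xi> - cos \<theta> *\<^sub>R e"
  define eT where "eT = e - (e \<bullet> n) *\<^sub>R n"
  define \<sigma> :: real where "\<sigma> = (if v \<bullet> e \<le> 0 then 1 else -1)"
  define u where "u = \<sigma> *\<^sub>R v - eT"
  have n: "n \<bullet> n = 1" and vn: "v \<bullet> n = 0" and ee: "e \<bullet> e = 1"
    using norm_capC_diff[OF \<xi>] v e by (simp_all add: n_def dot_square_norm)
  have eT: "eT \<bullet> n = 0" "v \<bullet> eT = v \<bullet> e" "eT \<bullet> e = 1 - (e \<bullet> n)\<^sup>2" "eT \<bullet> eT = 1 - (e \<bullet> n)\<^sup>2"
    using n vn ee by (simp_all add: eT_def inner_diff_left inner_diff_right inner_commute[of e n]
        power2_eq_square algebra_simps)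
  have \<sigma>: "\<sigma>\<^sup>2 = 1" "\<sigma> * (v \<bullet> e) \<le> 0"
    by (auto simp: \<sigma>_def)
  have "u \<bullet> n = 0"
    using eT by (simp add: u_def inner_diff_left vn)
  moreover have "\<xi> \<bullet> e < 0 \<or> u \<bullet> e < 0"
  proof (cases "\<xi> \<bullet> e < 0")
    case False
    with \<xi> have "e \<bullet> n = - cos \<theta>"
      using ee by (auto simp: capC_def n_def inner_diff_right inner_commute)
    moreover have "(cos \<theta>)\<^sup>2 < 1"
      using sin_gt_zero[OF \<theta>] sin_cos_squared_add[of \<theta>] by (smt (verit) zero_less_power)
    ultimately show ?thesis
      using \<sigma> eT by (simp add: u_def inner_diff_left)
  qed simp
  moreover have "norm u \<le> norm v + 1"
  proof -
    have "norm eT \<le> 1"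
      using eT(4) by (simp add: norm_eq_sqrt_inner)
    moreover have "norm (\<sigma> *\<^sub>R v) = norm v"
      by (simp add: \<sigma>_def)
    ultimately show ?thesis
      using norm_triangle_ineq4[of "\<sigma> *\<^sub>R v" eT] unfolding u_def by linarith
  qed
  moreover have "(norm v)\<^sup>2 \<le> \<bar>v \<bullet> u\<bar>"
  proof -
    have "\<sigma> * (v \<bullet> u) = (norm v)\<^sup>2 - \<sigma> * (v \<bullet> e)"
      using \<sigma> eT unfolding u_def
      by (simp add: inner_diff_right dot_square_norm right_diff_distrib mult.assoc[symmetric]
          power2_eq_square)
    then show ?thesis
      using \<sigma> by (auto simp: \<sigma>_def split: if_splits)
  qed
  ultimately show ?thesis
    using that by (simp add: n_def)
qed

lemma norm_sgrad_le:
  assumes e: "norm e = 1" and \<theta>: "0 < \<theta>" "\<theta> < pi"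
    and lip: "R-lipschitz_on (capC \<theta> e) h" and \<xi>: "\<xi> \<in> capC \<theta> e"
    and diff: "ext0 \<theta> e h differentiable (at \<xi> within capcone \<theta> e)"
  shows "norm (sgrad \<theta> e h \<xi>) \<le> 2 * R + 1"
proof -
  define v where "v = sgrad \<theta> e h \<xi>"
  have "R \<ge> 0"
    using lipschitz_on_nonneg[OF lip] .
  obtain u where u: "u \<bullet> (\<xi> - cos \<theta> *\<^sub>R e) = 0" "\<xi> \<bullet> e < 0 \<or> u \<bullet> e < 0"
      "norm u \<le> norm v + 1" "(norm v)\<^sup>2 \<le> \<bar>v \<bullet> u\<bar>"
    using inward_tangent_dominating[OF e \<theta> \<xi>] sgrad_inner_normal[OF \<xi> diff] by (metis v_def)
  have "\<bar>v \<bullet> u\<bar> \<le> 2 * R * norm u"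
    unfolding v_def by (rule abs_sgrad_inner_tangent_le[OF e lip \<xi> diff u(1,2)])
  also have "\<dots> \<le> 2 * R * (norm v + 1)"
    using u(3) \<open>R \<ge> 0\<close> by (simp add: mult_left_mono)
  finally have "norm v * norm v \<le> 2 * R * (norm v + 1)"
    using u(4) by (simp add: power2_eq_square)
  show ?thesis
  proof (rule ccontr)
    assume "\<not> ?thesis"
    then have "(2 * R + 1) * norm v < norm v * norm v"
      using \<open>R \<ge> 0\<close> by (intro mult_strict_right_mono) (auto simp: v_def)
    with \<open>norm v * norm v \<le> _\<close> \<open>\<not> ?thesis\<close> show False
      by (simp add: v_def algebra_simps)
  qed
qed

theorem lemma4p2:
  fixes e :: "real^'n" and \<theta> :: real and \<phi> :: "real \<Rightarrow> real"
    and f :: "real^'n \<Rightarrow> real" and M :: real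
  assumes "CARD('n) \<ge> 2" and "norm e = 1" and "0 < \<theta>" and "\<theta> < pi"
    and "class_O (CARD('n) - 1) \<phi>"
    and "\<forall>\<xi> \<in> capC \<theta> e. f \<xi> > 0"
    and "\<exists>U. capC \<theta> e \<subseteq> U \<and> smooth_on U f"
  shows "\<exists>C1 > 0. \<forall>K. cap_body0 \<theta> e K \<and> even_cap \<theta> e (supp \<theta> e K)
            \<and> (\<forall>\<xi> \<in> capC \<theta> e. supp \<theta> e K \<xi> > 0)
            \<and> solves_eq \<theta> e \<phi> f K (supp \<theta> e K)
            \<and> (\<forall>\<xi> \<in> capC \<theta> e. \<bar>supp \<theta> e K \<xi>\<bar> \<le> M)
          \<longrightarrow> (\<forall>\<xi> \<in> capC \<theta> e. norm (sgrad \<theta> e (supp \<theta> e K) \<xi>) \<le> C1)"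
proof -
  note e = \<open>norm e = 1\<close> and \<theta> = \<open>0 < \<theta>\<close> \<open>\<theta> < pi\<close>
  define R where "R = \<bar>M\<bar> + 2 * \<bar>M\<bar> / sin \<theta>"
  have "0 \<le> R"
    using sin_gt_zero[OF \<theta>] by (simp add: R_def)
  show ?thesis
  proof (intro exI[of _ "2 * R + 1"] conjI allI impI ballI)
    show "0 < 2 * R + 1"
      using \<open>0 \<le> R\<close> by simp
    fix K \<xi>
    assume hyps: "cap_body0 \<theta> e K \<and> even_cap \<theta> e (supp \<theta> e K)
            \<and> (\<forall>\<xi> \<in> capC \<theta> e. supp \<theta> e K \<xi> > 0)
            \<and> solves_eq \<theta> e \<phi> f K (supp \<theta> e K)
            \<and> (\<forall>\<xi> \<in> capC \<theta> e. \<bar>supp \<theta> e K \<xi>\<bar> \<le> M)"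
      and \<xi>: "\<xi> \<in> capC \<theta> e"
    have cb: "cap_body \<theta> e K"
      using hyps by (simp add: cap_body0_def)
    have "K \<subseteq> cball 0 R"
      unfolding R_def using cap_body_subset_cball[OF e \<theta> cb] hyps by blast
    then have "R-lipschitz_on (capC \<theta> e) (supp \<theta> e K)"
      by (rule supp_lipschitz_on_capC[OF e \<theta> cb _ \<open>0 \<le> R\<close>])
    moreover have "ext0 \<theta> e (supp \<theta> e K) differentiable (at \<xi> within capcone \<theta> e)"
      using hyps \<xi> capC_subset_capcone[of \<theta> e] unfolding solves_eq_def by blast
    ultimately show "norm (sgrad \<theta> e (supp \<theta> e K) \<xi>) \<le> 2 * R + 1"
      by (rule norm_sgrad_le[OF e \<theta> _ \<xi>])
  qed
qed

end
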